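(* Let $G_i=(V_i,E_i)$ be a graph, $i\in\{1,2\}$, let $\delta_2$ be the minimum degree of $G_2$, let $S_1\subseteq V_1$ and let $k$ be an integer. If $S_1\times V_2$ is a $k$-daf set in $G_1\times G_2$, then $S_1$ is a $(k-\delta_2)$-daf set in $G_1$.
   Context: All graphs are finite and simple (with non-empty vertex sets). For a graph $G=(V,E)$, a set $S\subseteq V$ and $v\in V$, let $\delta_S(v)=|\{u\in S: uv\in E\}|$ and $\overline{S}=V\setminus S$. For an integer $k$, a non-empty set $S\subseteq V$ is a defensive $k$-alliance if $\delta_S(v)\ge \delta_{\overline S}(v)+k$ for every $v\in S$. A set $X\subseteq V$ is a defensive $k$-alliance free set ($k$-daf set) if no defensive $k$-alliance $S$ satisfies $S\subseteq X$. The Cartesian product $G_1\times G_2$ of $G_1=(V_1,E_1)$, $G_2=(V_2,E_2)$ has vertex set $V_1\times V_2$, with $(a,b)$ adjacent to $(c,d)$ iff either $a=c$ and $bd\in E_2$, or $b=d$ and $ac\in E_1$. *)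

theory Defs
  imports Main
begin

definition graph :: "'a set \<Rightarrow> ('a \<Rightarrow> 'a \<Rightarrow> bool) \<Rightarrow> bool" where
  "graph V E \<longleftrightarrow> finite V \<and> V \<noteq> {} \<and>
     (\<forall>u v. E u v \<longrightarrow> u \<in> V \<and> v \<in> V) \<and>
     (\<forall>u v. E u v \<longrightarrow> E v u) \<and> (\<forall>v. \<not> E v v)"

definition deg_in :: "('a \<Rightarrow> 'a \<Rightarrow> bool) \<Rightarrow> 'a set \<Rightarrow> 'a \<Rightarrow> nat" where
  "deg_in E S v = card {u \<in> S. E u v}"

definition min_degree :: "'a set \<Rightarrow> ('a \<Rightarrow> 'a \<Rightarrow> bool) \<Rightarrow> nat" where
  "min_degree V E = Min ((\<lambda>v. deg_in E V v) ` V)"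

definition defensive_alliance :: "'a set \<Rightarrow> ('a \<Rightarrow> 'a \<Rightarrow> bool) \<Rightarrow> int \<Rightarrow> 'a set \<Rightarrow> bool" where
  "defensive_alliance V E k S \<longleftrightarrow> S \<noteq> {} \<and> S \<subseteq> V \<and>
     (\<forall>v\<in>S. int (deg_in E S v) \<ge> int (deg_in E (V - S) v) + k)"

definition daf_set :: "'a set \<Rightarrow> ('a \<Rightarrow> 'a \<Rightarrow> bool) \<Rightarrow> int \<Rightarrow> 'a set \<Rightarrow> bool" where
  "daf_set V E k X \<longleftrightarrow> X \<subseteq> V \<and> (\<forall>S. S \<subseteq> X \<longrightarrow> \<not> defensive_alliance V E k S)"

definition cart_edge :: "('a \<Rightarrow> 'a \<Rightarrow> bool) \<Rightarrow> ('b \<Rightarrow> 'b \<Rightarrow> bool) \<Rightarrow> 'a \<times> 'b \<Rightarrow> 'a \<times> 'b \<Rightarrow> bool" where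
  "cart_edge E1 E2 p q \<longleftrightarrow>
     (fst p = fst q \<and> E2 (snd p) (snd q)) \<or> (snd p = snd q \<and> E1 (fst p) (fst q))"

end

theory Submission
  imports Defs
begin

(* We argue by contraposition: a defensive (k - delta2)-alliance S of G1
   inside S1 lifts to the defensive k-alliance S x V2 of G1 x G2 inside S1 x V2.
   The lifting rests on two counting facts about the Cartesian product: a vertex (a,b)
   with a in A and b in B has exactly deg_A(a) + deg_B(b) neighbours in A x B (its
   G1-neighbours in the copy A x {b} and its G2-neighbours in the copy {a} x B), while a
   vertex (a,b) with a outside A has exactly deg_A(a) neighbours in A x B.  Applied with
   A = S and A = V1 - S, the alliance inequality at a gains deg_V2(b) >= delta2 on the
   left-hand side and nothing on the right, which turns k - delta2 into k. *)

text \<open>Neighbours of a vertex of a product set \<open>A \<times> B\<close> inside that set: they split into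
  the disjoint \<open>G\<^sub>1\<close>-fibre and \<open>G\<^sub>2\<close>-fibre through the vertex.\<close>
lemma deg_in_cart_product_inside:
  assumes "finite A" "finite B" "a \<in> A" "b \<in> B" and irrefl: "\<And>v. \<not> E1 v v"
  shows "deg_in (cart_edge E1 E2) (A \<times> B) (a, b) = deg_in E1 A a + deg_in E2 B b"
proof -
  have split: "{p \<in> A \<times> B. cart_edge E1 E2 p (a, b)} =
      ({x \<in> A. E1 x a} \<times> {b}) \<union> ({a} \<times> {y \<in> B. E2 y b})"
    using assms unfolding cart_edge_def by auto
  have disjoint: "({x \<in> A. E1 x a} \<times> {b}) \<inter> ({a} \<times> {y \<in> B. E2 y b}) = {}"
    using irrefl by auto
  have finite_fibres: "finite ({x \<in> A. E1 x a} \<times> {b})" "finite ({a} \<times> {y \<in> B. E2 y b})"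
    using assms by auto
  show ?thesis
    unfolding deg_in_def split card_Un_disjoint[OF finite_fibres disjoint]
    by (simp add: card_cartesian_product)
qed

text \<open>A vertex whose first coordinate lies outside \<open>A\<close> sees \<open>A \<times> B\<close> only through its
  \<open>G\<^sub>1\<close>-fibre.\<close>
lemma deg_in_cart_product_outside:
  assumes "a \<notin> A" "b \<in> B"
  shows "deg_in (cart_edge E1 E2) (A \<times> B) (a, b) = deg_in E1 A a"
proof -
  have "{p \<in> A \<times> B. cart_edge E1 E2 p (a, b)} = {x \<in> A. E1 x a} \<times> {b}"
    using assms unfolding cart_edge_def by auto
  then show ?thesis
    unfolding deg_in_def by (simp add: card_cartesian_product)
qed

lemma min_degree_le_deg:
  assumes "finite V" "v \<in> V"
  shows "min_degree V E \<le> deg_in E V v"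
  unfolding min_degree_def using assms by (intro Min_le) auto

lemma defensive_alliance_cart_lift:
  assumes G1: "graph V1 E1" and G2: "graph V2 E2"
    and deg_bound: "\<And>b. b \<in> V2 \<Longrightarrow> d \<le> deg_in E2 V2 b"
    and alliance: "defensive_alliance V1 E1 (k - int d) S"
  shows "defensive_alliance (V1 \<times> V2) (cart_edge E1 E2) k (S \<times> V2)"
  unfolding defensive_alliance_def
proof (intro conjI ballI)
  have S: "S \<noteq> {}" "S \<subseteq> V1" using alliance unfolding defensive_alliance_def by auto
  have V2: "finite V2" "V2 \<noteq> {}" using G2 unfolding graph_def by auto
  have finite_S: "finite S" using S G1 finite_subset unfolding graph_def by blast
  have irrefl: "\<And>v. \<not> E1 v v" using G1 unfolding graph_def by auto
  show "S \<times> V2 \<noteq> {}" "S \<times> V2 \<subseteq> V1 \<times> V2" using S V2 by auto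
  fix p assume "p \<in> S \<times> V2"
  then obtain a b where p: "p = (a, b)" "a \<in> S" "b \<in> V2" by auto
  have at_a: "int (deg_in E1 S a) \<ge> int (deg_in E1 (V1 - S) a) + (k - int d)"
    using alliance p unfolding defensive_alliance_def by auto
  have inside: "deg_in (cart_edge E1 E2) (S \<times> V2) p = deg_in E1 S a + deg_in E2 V2 b"
    using deg_in_cart_product_inside[of S V2 a b E1 E2] finite_S V2(1) p irrefl by simp
  have "V1 \<times> V2 - S \<times> V2 = (V1 - S) \<times> V2" by auto
  then have outside: "deg_in (cart_edge E1 E2) (V1 \<times> V2 - S \<times> V2) p = deg_in E1 (V1 - S) a"
    using deg_in_cart_product_outside[of a "V1 - S" b V2] p by simp
  show "int (deg_in (cart_edge E1 E2) (S \<times> V2) p)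
      \<ge> int (deg_in (cart_edge E1 E2) (V1 \<times> V2 - S \<times> V2) p) + k"
    using inside outside at_a deg_bound[OF p(3)] by linarith
qed

theorem corollary2:
  fixes V1 :: "'a set" and E1 :: "'a \<Rightarrow> 'a \<Rightarrow> bool"
    and V2 :: "'b set" and E2 :: "'b \<Rightarrow> 'b \<Rightarrow> bool"
    and S1 :: "'a set" and k :: int
  assumes "graph V1 E1" and "graph V2 E2" and "S1 \<subseteq> V1"
    and "daf_set (V1 \<times> V2) (cart_edge E1 E2) k (S1 \<times> V2)"
  shows "daf_set V1 E1 (k - int (min_degree V2 E2)) S1"
  unfolding daf_set_def
proof (intro conjI allI impI notI)
  show "S1 \<subseteq> V1" by fact
  fix S assume "S \<subseteq> S1"
    and alliance: "defensive_alliance V1 E1 (k - int (min_degree V2 E2)) S"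
  have "finite V2" using assms(2) unfolding graph_def by simp
  then have "\<And>b. b \<in> V2 \<Longrightarrow> min_degree V2 E2 \<le> deg_in E2 V2 b"
    by (rule min_degree_le_deg)
  then have "defensive_alliance (V1 \<times> V2) (cart_edge E1 E2) k (S \<times> V2)"
    by (rule defensive_alliance_cart_lift[OF assms(1,2) _ alliance])
  moreover have "S \<times> V2 \<subseteq> S1 \<times> V2" using \<open>S \<subseteq> S1\<close> by auto
  ultimately show False using assms(4) unfolding daf_set_def by blast
qed

end
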